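(* Let $n\ge2$, $N=\binom n2$ and $1\le M\le N-1$. Let $H$ be the graph whose vertices are the labeled graphs on $[n]$ with exactly $M$ edges, two graphs being adjacent iff one is obtained from the other by replacing one edge by one non-edge, and let $m_G(G')=\frac{1}{M(N-M)+1}$ if $G'=G$ or $G'$ is adjacent to $G$ in $H$, and $0$ otherwise. Then for all distinct $G_1,G_2\in V(H)$, \[\kappa(G_1,G_2)\ge\frac{N}{M(N-M)+1}.\]
   Context: For a graph $H$ with random walk $m$ (each $m_x$ a probability distribution supported on $x$ and its neighbors), $d$ the graph distance on $H$, the transportation distance is $W(m_1,m_2)=\inf_A\sum_{x,y}A(x,y)d(x,y)$ over couplings $A$ of $m_1,m_2$ (i.e. $\sum_yA(x,y)=m_1(x)$, $\sum_xA(x,y)=m_2(y)$), and the Ollivier Ricci curvature is $\kappa(x,y)=1-W(m_x,m_y)/d(x,y)$. *)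

theory Defs
  imports "HOL-Analysis.Analysis"
begin

fun walk :: "'v set \<Rightarrow> ('v \<Rightarrow> 'v \<Rightarrow> bool) \<Rightarrow> nat \<Rightarrow> 'v \<Rightarrow> 'v \<Rightarrow> bool" where
  "walk V adj 0 x y \<longleftrightarrow> x \<in> V \<and> x = y"
| "walk V adj (Suc k) x y \<longleftrightarrow> x \<in> V \<and> (\<exists>z\<in>V. adj x z \<and> walk V adj k z y)"

definition gdist :: "'v set \<Rightarrow> ('v \<Rightarrow> 'v \<Rightarrow> bool) \<Rightarrow> 'v \<Rightarrow> 'v \<Rightarrow> nat" where
  "gdist V adj x y = (LEAST k. walk V adj k x y)"

definition couplings :: "'v set \<Rightarrow> ('v \<Rightarrow> real) \<Rightarrow> ('v \<Rightarrow> real) \<Rightarrow> ('v \<Rightarrow> 'v \<Rightarrow> real) set" where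
  "couplings V mu1 mu2 = {A. (\<forall>x\<in>V. \<forall>y\<in>V. A x y \<ge> 0)
       \<and> (\<forall>x\<in>V. (\<Sum>y\<in>V. A x y) = mu1 x)
       \<and> (\<forall>y\<in>V. (\<Sum>x\<in>V. A x y) = mu2 y)}"

definition transport_dist :: "'v set \<Rightarrow> ('v \<Rightarrow> 'v \<Rightarrow> bool) \<Rightarrow> ('v \<Rightarrow> real) \<Rightarrow> ('v \<Rightarrow> real) \<Rightarrow> real" where
  "transport_dist V adj mu1 mu2 =
     Inf ((\<lambda>A. \<Sum>x\<in>V. \<Sum>y\<in>V. A x y * real (gdist V adj x y)) ` couplings V mu1 mu2)"

definition ollivier_ricci :: "'v set \<Rightarrow> ('v \<Rightarrow> 'v \<Rightarrow> bool) \<Rightarrow> ('v \<Rightarrow> 'v \<Rightarrow> real) \<Rightarrow> 'v \<Rightarrow> 'v \<Rightarrow> real" where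
  "ollivier_ricci V adj m x y =
     1 - transport_dist V adj (m x) (m y) / real (gdist V adj x y)"

(* The specific graph H: labeled graphs on [n] = {0..<n} with exactly M edges,
   a graph being represented by its edge set (a set of 2-subsets of {0..<n}). *)
definition all_edges :: "nat \<Rightarrow> nat set set" where
  "all_edges n = {e. e \<subseteq> {0..<n} \<and> card e = 2}"

definition graphs_M :: "nat \<Rightarrow> nat \<Rightarrow> nat set set set" where
  "graphs_M n M = {G. G \<subseteq> all_edges n \<and> card G = M}"

definition switch_adj :: "nat \<Rightarrow> nat set set \<Rightarrow> nat set set \<Rightarrow> bool" where
  "switch_adj n G G' \<longleftrightarrow> (\<exists>e\<in>G. \<exists>f\<in>all_edges n - G. G' = insert f (G - {e}))"

definition switch_walk :: "nat \<Rightarrow> nat \<Rightarrow> nat set set \<Rightarrow> nat set set \<Rightarrow> real" where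
  "switch_walk n M G G' =
     (if G' = G \<or> switch_adj n G G' then 1 / (real M * (real (n choose 2) - real M) + 1) else 0)"

end

theory Submission
  imports Defs
begin

text \<open>
  In the exchange graph the graph distance is \<open>|G - G'|\<close>, the number of edges to be exchanged.
  For adjacent \<open>x\<close> and \<open>y = x - {a} + {b}\<close>, the transposition of the edges \<open>a\<close> and \<open>b\<close>
  is an automorphism of the exchange graph taking \<open>x\<close> to \<open>y\<close>, so it maps the neighbourhood
  of \<open>x\<close> onto that of \<open>y\<close>; corrected so that \<open>x\<close> and \<open>y\<close> stay put, it transports
  \<open>m x\<close> to \<open>m y\<close> moving only the \<open>(M - 1)(N - M - 1)\<close> neighbours of \<open>x\<close> that contain
  \<open>a\<close> but not \<open>b\<close>, each by distance 1. Gluing such couplings along a geodesic gives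
  \<open>W(m G1, m G2) \<le> d(G1, G2) (M - 1)(N - M - 1) / (M(N - M) + 1)\<close>, and
  \<open>M(N - M) + 1 - (M - 1)(N - M - 1) = N\<close>.
\<close>

definition coupling_cost :: "'v set \<Rightarrow> ('v \<Rightarrow> 'v \<Rightarrow> real) \<Rightarrow> ('v \<Rightarrow> 'v \<Rightarrow> real) \<Rightarrow> real" where
  "coupling_cost V d A = (\<Sum>x\<in>V. \<Sum>y\<in>V. A x y * d x y)"

lemma transport_dist_le_coupling_cost:
  assumes "A \<in> couplings V mu1 mu2"
  shows "transport_dist V adj mu1 mu2 \<le> coupling_cost V (\<lambda>x y. real (gdist V adj x y)) A"
proof -
  have bdd: "bdd_below ((\<lambda>A. \<Sum>x\<in>V. \<Sum>y\<in>V. A x y * real (gdist V adj x y)) ` couplings V mu1 mu2)"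
    by (rule bdd_belowI[of _ 0]) (auto simp: couplings_def intro!: sum_nonneg)
  show ?thesis
    unfolding transport_dist_def coupling_cost_def by (rule cInf_lower[OF imageI[OF assms] bdd])
qed

lemma diagonal_coupling:
  assumes "finite V" "\<And>x. x \<in> V \<Longrightarrow> mu x \<ge> 0"
  shows "(\<lambda>x y. if x = y then mu x else 0) \<in> couplings V mu mu"
  using assms by (auto simp: couplings_def if_distrib sum.delta sum.delta' cong: if_cong)

lemma coupling_cost_diagonal:
  assumes "\<And>x. x \<in> V \<Longrightarrow> d x x = 0"
  shows "coupling_cost V d (\<lambda>x y. if x = y then mu x else 0) = 0"
  unfolding coupling_cost_def using assms by (intro sum.neutral ballI) auto

lemma bij_betw_coupling:
  fixes p :: real
  assumes V: "finite V" and S: "S \<subseteq> V" "S' \<subseteq> V" and T: "bij_betw T S S'" and p: "p \<ge> 0"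
  defines "A \<equiv> \<lambda>x y. if x \<in> S \<and> y = T x then p else 0"
  shows "A \<in> couplings V (\<lambda>x. if x \<in> S then p else 0) (\<lambda>y. if y \<in> S' then p else 0)"
    and "coupling_cost V d A = p * (\<Sum>x\<in>S. d x (T x))"
proof -
  have TS: "T x \<in> V" if "x \<in> S" for x using T S that by (auto dest: bij_betw_apply)
  have "(\<Sum>x\<in>V. A x y) = (if y \<in> S' then p else 0)" for y
  proof -
    have "(\<Sum>x\<in>V. A x y) = (\<Sum>x\<in>V. if x \<in> S then (if y = T x then p else 0) else 0)"
      unfolding A_def by (intro sum.cong) auto
    also have "\<dots> = (\<Sum>x\<in>S. if y = T x then p else 0)"
      by (simp only: sum.inter_restrict[OF V, symmetric] inf.absorb2[OF S(1)])
    also have "\<dots> = (\<Sum>z\<in>S'. if y = z then p else 0)"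
      by (rule sum.reindex_bij_betw[OF T])
    also have "\<dots> = (if y \<in> S' then p else 0)"
      using finite_subset[OF S(2) V] by simp
    finally show ?thesis .
  qed
  then show "A \<in> couplings V (\<lambda>x. if x \<in> S then p else 0) (\<lambda>y. if y \<in> S' then p else 0)"
    using V TS p unfolding A_def by (auto simp: couplings_def if_distrib sum.delta' cong: if_cong)
  have "coupling_cost V d A = (\<Sum>x\<in>V. if x \<in> S then p * d x (T x) else 0)"
    unfolding coupling_cost_def A_def using V TS
    by (intro sum.cong refl) (auto simp: if_distrib[of "\<lambda>c. c * _"] sum.delta' cong: if_cong)
  also have "\<dots> = p * (\<Sum>x\<in>S. d x (T x))"
    by (simp only: sum.inter_restrict[OF V, symmetric] inf.absorb2[OF S(1)] sum_distrib_left)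
  finally show "coupling_cost V d A = p * (\<Sum>x\<in>S. d x (T x))" .
qed

lemma couplings_snd_marginal_nonneg:
  assumes "A \<in> couplings V m1 m2" "y \<in> V"
  shows "m2 y \<ge> 0"
proof -
  have "m2 y = (\<Sum>x\<in>V. A x y)" "\<forall>x\<in>V. A x y \<ge> 0"
    using assms unfolding couplings_def by auto
  then show ?thesis by (simp add: sum_nonneg)
qed

text \<open>Where \<open>mu y = 0\<close> both the column \<open>A \<cdot> y\<close> and the row \<open>B y \<cdot>\<close> vanish, so the junk
  value \<open>x / 0 = 0\<close> does no harm.\<close>

definition glue_couplings ::
    "'v set \<Rightarrow> ('v \<Rightarrow> real) \<Rightarrow> ('v \<Rightarrow> 'v \<Rightarrow> real) \<Rightarrow> ('v \<Rightarrow> 'v \<Rightarrow> real) \<Rightarrow> 'v \<Rightarrow> 'v \<Rightarrow> real" where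
  "glue_couplings V mu A B x z = (\<Sum>y\<in>V. A x y * B y z / mu y)"

lemma glue_couplings_marginals:
  assumes V: "finite V" and A: "A \<in> couplings V m1 m2" and B: "B \<in> couplings V m2 m3"
    and y: "y \<in> V"
  shows "x \<in> V \<Longrightarrow> (\<Sum>z\<in>V. A x y * B y z / m2 y) = A x y"
    and "z \<in> V \<Longrightarrow> (\<Sum>x\<in>V. A x y * B y z / m2 y) = B y z"
proof -
  have A_nonneg: "\<And>x. x \<in> V \<Longrightarrow> A x y \<ge> 0" and colA: "(\<Sum>x\<in>V. A x y) = m2 y"
    using A y unfolding couplings_def by auto
  have B_nonneg: "\<And>z. z \<in> V \<Longrightarrow> B y z \<ge> 0" and rowB: "(\<Sum>z\<in>V. B y z) = m2 y"
    using B y unfolding couplings_def by auto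
  have zero: "A x y = 0" "B y z = 0" if "m2 y = 0" "x \<in> V" "z \<in> V" for x z
    using that sum_nonneg_eq_0_iff[OF V] A_nonneg B_nonneg colA rowB by metis+
  have "(\<Sum>z\<in>V. A x y * B y z / m2 y) = A x y * (\<Sum>z\<in>V. B y z) / m2 y"
    by (simp add: sum_distrib_left sum_divide_distrib)
  then show "(\<Sum>z\<in>V. A x y * B y z / m2 y) = A x y" if "x \<in> V"
    using rowB zero(1)[OF _ that y] by (cases "m2 y = 0") auto
  have "(\<Sum>x\<in>V. A x y * B y z / m2 y) = (\<Sum>x\<in>V. A x y) * B y z / m2 y"
    by (simp add: sum_distrib_right sum_divide_distrib)
  then show "(\<Sum>x\<in>V. A x y * B y z / m2 y) = B y z" if "z \<in> V"
    using colA zero(2)[OF _ y that] by (cases "m2 y = 0") auto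
qed

lemma glue_couplings_in_couplings:
  assumes V: "finite V" and A: "A \<in> couplings V m1 m2" and B: "B \<in> couplings V m2 m3"
  shows "glue_couplings V m2 A B \<in> couplings V m1 m3"
proof -
  note marg = glue_couplings_marginals[OF V A B]
  have A_nonneg: "\<And>x y. x \<in> V \<Longrightarrow> y \<in> V \<Longrightarrow> A x y \<ge> 0"
    and rowA: "\<And>x. x \<in> V \<Longrightarrow> (\<Sum>y\<in>V. A x y) = m1 x"
    using A unfolding couplings_def by auto
  have B_nonneg: "\<And>y z. y \<in> V \<Longrightarrow> z \<in> V \<Longrightarrow> B y z \<ge> 0"
    and colB: "\<And>z. z \<in> V \<Longrightarrow> (\<Sum>y\<in>V. B y z) = m3 z"
    using B unfolding couplings_def by auto
  have "glue_couplings V m2 A B x z \<ge> 0" if "x \<in> V" "z \<in> V" for x z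
    unfolding glue_couplings_def using that A_nonneg B_nonneg couplings_snd_marginal_nonneg[OF A]
    by (intro sum_nonneg divide_nonneg_nonneg mult_nonneg_nonneg) auto
  moreover have "(\<Sum>z\<in>V. glue_couplings V m2 A B x z) = m1 x" if x: "x \<in> V" for x
  proof -
    have "(\<Sum>z\<in>V. glue_couplings V m2 A B x z) = (\<Sum>y\<in>V. \<Sum>z\<in>V. A x y * B y z / m2 y)"
      unfolding glue_couplings_def by (rule sum.swap)
    also have "\<dots> = (\<Sum>y\<in>V. A x y)" using marg(1) x by (intro sum.cong refl)
    finally show ?thesis using rowA x by simp
  qed
  moreover have "(\<Sum>x\<in>V. glue_couplings V m2 A B x z) = m3 z" if z: "z \<in> V" for z
  proof -
    have "(\<Sum>x\<in>V. glue_couplings V m2 A B x z) = (\<Sum>y\<in>V. \<Sum>x\<in>V. A x y * B y z / m2 y)"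
      unfolding glue_couplings_def by (rule sum.swap)
    also have "\<dots> = (\<Sum>y\<in>V. B y z)" using marg(2) z by (intro sum.cong refl)
    finally show ?thesis using colB z by simp
  qed
  ultimately show ?thesis unfolding couplings_def by blast
qed

lemma coupling_cost_glue_couplings_le:
  assumes V: "finite V" and A: "A \<in> couplings V m1 m2" and B: "B \<in> couplings V m2 m3"
    and tri: "\<And>x y z. x \<in> V \<Longrightarrow> y \<in> V \<Longrightarrow> z \<in> V \<Longrightarrow> d x z \<le> d x y + d y z"
  shows "coupling_cost V d (glue_couplings V m2 A B) \<le> coupling_cost V d A + coupling_cost V d B"
proof -
  note marg = glue_couplings_marginals[OF V A B]
  define w where "w x y z = A x y * B y z / m2 y" for x y z
  have w_nonneg: "w x y z \<ge> 0" if "x \<in> V" "y \<in> V" "z \<in> V" for x y z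
  proof -
    have "A x y \<ge> 0" "B y z \<ge> 0" "m2 y \<ge> 0"
      using A B that couplings_snd_marginal_nonneg[OF A] unfolding couplings_def by auto
    then show ?thesis unfolding w_def by simp
  qed
  have "coupling_cost V d (glue_couplings V m2 A B) = (\<Sum>x\<in>V. \<Sum>z\<in>V. \<Sum>y\<in>V. w x y z * d x z)"
    unfolding coupling_cost_def glue_couplings_def w_def by (simp add: sum_distrib_right)
  also have "\<dots> \<le> (\<Sum>x\<in>V. \<Sum>z\<in>V. \<Sum>y\<in>V. w x y z * d x y + w x y z * d y z)"
    by (intro sum_mono) (auto simp: w_nonneg tri distrib_left[symmetric] intro!: mult_left_mono)
  also have "\<dots> = (\<Sum>x\<in>V. \<Sum>z\<in>V. \<Sum>y\<in>V. w x y z * d x y)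
                   + (\<Sum>x\<in>V. \<Sum>z\<in>V. \<Sum>y\<in>V. w x y z * d y z)"
    by (simp add: sum.distrib)
  also have "(\<Sum>x\<in>V. \<Sum>z\<in>V. \<Sum>y\<in>V. w x y z * d x y) = (\<Sum>x\<in>V. \<Sum>y\<in>V. (\<Sum>z\<in>V. w x y z) * d x y)"
    by (simp add: sum_distrib_right) (rule sum.cong[OF refl], rule sum.swap)
  also have "\<dots> = coupling_cost V d A"
    unfolding coupling_cost_def w_def using marg(1) by simp
  also have "(\<Sum>x\<in>V. \<Sum>z\<in>V. \<Sum>y\<in>V. w x y z * d y z) = (\<Sum>z\<in>V. \<Sum>y\<in>V. (\<Sum>x\<in>V. w x y z) * d y z)"
    by (simp add: sum_distrib_right) (subst sum.swap, rule sum.cong[OF refl], rule sum.swap)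
  also have "\<dots> = (\<Sum>z\<in>V. \<Sum>y\<in>V. B y z * d y z)"
    unfolding w_def using marg(2) by simp
  also have "\<dots> = coupling_cost V d B"
    unfolding coupling_cost_def by (rule sum.swap)
  finally show ?thesis .
qed

lemma coupling_along_walk:
  assumes V: "finite V"
    and tri: "\<And>x y z. x \<in> V \<Longrightarrow> y \<in> V \<Longrightarrow> z \<in> V \<Longrightarrow> d x z \<le> d x y + d y z"
    and d_refl: "\<And>x. x \<in> V \<Longrightarrow> d x x = 0"
    and m_nonneg: "\<And>x y. x \<in> V \<Longrightarrow> y \<in> V \<Longrightarrow> m x y \<ge> 0"
    and adjacent: "\<And>x z. x \<in> V \<Longrightarrow> z \<in> V \<Longrightarrow> adj x z
                      \<Longrightarrow> \<exists>A\<in>couplings V (m x) (m z). coupling_cost V d A \<le> c"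
  shows "walk V adj k x y \<Longrightarrow> \<exists>A\<in>couplings V (m x) (m y). coupling_cost V d A \<le> real k * c"
proof (induction k arbitrary: x)
  case 0
  then have "x \<in> V" "y = x" by auto
  moreover have "(\<lambda>u v. if u = v then m x u else 0) \<in> couplings V (m x) (m x)"
    using diagonal_coupling[OF V, of "m x"] m_nonneg \<open>x \<in> V\<close> by blast
  ultimately show ?case
    using coupling_cost_diagonal[of V d, OF d_refl] by (intro bexI) auto
next
  case (Suc k)
  then obtain z where "x \<in> V" "z \<in> V" "adj x z" "walk V adj k z y" by auto
  then obtain A B where A: "A \<in> couplings V (m x) (m z)" "coupling_cost V d A \<le> c"
    and B: "B \<in> couplings V (m z) (m y)" "coupling_cost V d B \<le> real k * c"
    using adjacent Suc.IH by blast
  have "coupling_cost V d (glue_couplings V (m z) A B) \<le> real (Suc k) * c"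
    using coupling_cost_glue_couplings_le[OF V A(1) B(1), of d] tri A(2) B(2) by (simp add: algebra_simps)
  then show ?case using glue_couplings_in_couplings[OF V A(1) B(1)] by blast
qed

lemma finite_all_edges: "finite (all_edges n)"
  unfolding all_edges_def by (rule finite_subset[of _ "Pow {0..<n}"]) auto

lemma card_all_edges: "card (all_edges n) = n choose 2"
  unfolding all_edges_def using n_subsets[of "{0..<n}" 2] by simp

lemma finite_graphs_M: "finite (graphs_M n M)"
  unfolding graphs_M_def by (rule finite_subset[of _ "Pow (all_edges n)"]) (auto simp: finite_all_edges)

lemma graphs_M_finite: "G \<in> graphs_M n M \<Longrightarrow> finite G"
  unfolding graphs_M_def using finite_all_edges finite_subset by blast

lemma graphs_M_eqI:
  assumes "x \<in> graphs_M n M" "y \<in> graphs_M n M" "x - y = {}"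
  shows "x = y"
  using assms graphs_M_finite[OF assms(2)] unfolding graphs_M_def by (simp add: card_subset_eq)

lemma card_Diff_graphs_M_commute:
  assumes "x \<in> graphs_M n M" "y \<in> graphs_M n M"
  shows "card (x - y) = card (y - x)"
  using assms graphs_M_finite[OF assms(1)] graphs_M_finite[OF assms(2)]
    card_Diff_subset_Int[of x y] card_Diff_subset_Int[of y x]
  unfolding graphs_M_def by (simp add: Int_commute)

lemma switch_adj_graphs_M:
  assumes x: "x \<in> graphs_M n M" and adj: "switch_adj n x u"
  shows "u \<in> graphs_M n M"
proof -
  obtain e f where e: "e \<in> x" and f: "f \<in> all_edges n" "f \<notin> x" and u: "u = insert f (x - {e})"
    using adj unfolding switch_adj_def by auto
  have "card u = Suc (card (x - {e}))" using u f graphs_M_finite[OF x] by simp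
  also have "\<dots> = card x" using card_Suc_Diff1[OF graphs_M_finite[OF x] e] .
  finally have "card u = card x" .
  then show ?thesis using x u f unfolding graphs_M_def by auto
qed

lemma walk_card_Diff:
  "x \<in> graphs_M n M \<Longrightarrow> y \<in> graphs_M n M
   \<Longrightarrow> walk (graphs_M n M) (switch_adj n) (card (x - y)) x y"
proof (induction "card (x - y)" arbitrary: x)
  case 0
  then show ?case using graphs_M_eqI graphs_M_finite by (metis card_0_eq finite_Diff walk.simps(1))
next
  case (Suc k)
  obtain a where a: "a \<in> x - y" using Suc.hyps(2) by (metis card.empty ex_in_conv nat.distinct(1))
  have "card (y - x) = Suc k" using card_Diff_graphs_M_commute Suc by metis
  then obtain b where b: "b \<in> y - x" by (metis card.empty ex_in_conv nat.distinct(1))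
  define z where "z = insert b (x - {a})"
  have adj: "switch_adj n x z"
    using a b Suc.prems(2) unfolding switch_adj_def z_def graphs_M_def by blast
  have z: "z \<in> graphs_M n M" using switch_adj_graphs_M[OF Suc.prems(1) adj] .
  have "z - y = (x - y) - {a}" using a b unfolding z_def by auto
  then have "k = card (z - y)" using Suc.hyps(2) a graphs_M_finite[OF Suc.prems(1)] by simp
  then have "walk (graphs_M n M) (switch_adj n) (Suc k) x y"
    using Suc.hyps(1)[OF _ z Suc.prems(2)] Suc.prems(1) z adj by auto
  then show ?case using Suc.hyps(2) by simp
qed

lemma card_Diff_le_walk:
  "walk (graphs_M n M) (switch_adj n) k x y \<Longrightarrow> card (x - y) \<le> k"
proof (induction k arbitrary: x)
  case 0
  then show ?case by simp
next
  case (Suc k)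
  then obtain z where z: "z \<in> graphs_M n M" "switch_adj n x z"
    "walk (graphs_M n M) (switch_adj n) k z y" by auto
  then obtain e f where "z = insert f (x - {e})" unfolding switch_adj_def by auto
  then have "x - y \<subseteq> insert e (z - y)" by auto
  then have "card (x - y) \<le> card (insert e (z - y))"
    using graphs_M_finite[OF z(1)] by (intro card_mono) auto
  also have "\<dots> \<le> Suc (card (z - y))" using graphs_M_finite[OF z(1)] by (simp add: card_insert_if)
  finally show ?case using Suc.IH[OF z(3)] by simp
qed

lemma gdist_graphs_M:
  assumes "x \<in> graphs_M n M" "y \<in> graphs_M n M"
  shows "gdist (graphs_M n M) (switch_adj n) x y = card (x - y)"
  unfolding gdist_def by (rule Least_equality) (auto intro: walk_card_Diff[OF assms] card_Diff_le_walk)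

lemma card_Diff_triangle:
  assumes "finite x" "finite y"
  shows "card (x - z) \<le> card (x - y) + card (y - z)"
proof -
  have "card (x - z) \<le> card ((x - y) \<union> (y - z))"
    using assms by (intro card_mono) auto
  also have "\<dots> \<le> card (x - y) + card (y - z)" by (rule card_Un_le)
  finally show ?thesis .
qed

lemma switch_adj_image:
  assumes \<pi>: "inj \<pi>" "\<pi> ` all_edges n = all_edges n" and adj: "switch_adj n x u"
  shows "switch_adj n (\<pi> ` x) (\<pi> ` u)"
proof -
  obtain e f where e: "e \<in> x" and f: "f \<in> all_edges n" "f \<notin> x" and u: "u = insert f (x - {e})"
    using adj unfolding switch_adj_def by auto
  have "\<pi> ` u = insert (\<pi> f) (\<pi> ` x - {\<pi> e})" using u \<pi>(1) by (simp add: image_set_diff)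
  moreover have "\<pi> f \<in> all_edges n - \<pi> ` x" using f \<pi> by (auto simp: inj_image_mem_iff)
  ultimately show ?thesis using e unfolding switch_adj_def by blast
qed

lemma graphs_M_image:
  assumes "inj \<pi>" "\<pi> ` all_edges n = all_edges n" "x \<in> graphs_M n M"
  shows "\<pi> ` x \<in> graphs_M n M"
  using assms card_image[OF inj_on_subset[OF assms(1)]] unfolding graphs_M_def by auto

definition switch_nbhd :: "nat \<Rightarrow> nat \<Rightarrow> nat set set \<Rightarrow> nat set set set" where
  "switch_nbhd n M x = {u \<in> graphs_M n M. u = x \<or> switch_adj n x u}"

lemma image_switch_nbhd_subset:
  assumes "inj \<pi>" "\<pi> ` all_edges n = all_edges n" "x \<in> graphs_M n M"
  shows "image \<pi> ` switch_nbhd n M x \<subseteq> switch_nbhd n M (\<pi> ` x)"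
  using assms graphs_M_image[OF assms(1,2)] switch_adj_image[OF assms(1,2)]
  unfolding switch_nbhd_def by auto

lemma transpose_image_exchange:
  assumes "a \<in> x" "b \<notin> x"
  shows "Transposition.transpose a b ` x = insert b (x - {a})"
proof -
  have "Transposition.transpose a b ` x = Transposition.transpose a b ` insert a (x - {a})"
    using assms by (simp add: insert_absorb)
  also have "\<dots> = insert b (Transposition.transpose a b ` (x - {a}))"
    by (simp only: image_insert transpose_apply_first)
  also have "Transposition.transpose a b ` (x - {a}) = x - {a}"
    using assms by (intro transpose_image_eq) auto
  finally show ?thesis .
qed

lemma transpose_image_involutory:
  "Transposition.transpose a b ` Transposition.transpose a b ` u = u"
  by (simp add: image_comp)

lemma bij_betw_switch_nbhd_transpose:
  assumes x: "x \<in> graphs_M n M" and a: "a \<in> x" and b: "b \<in> all_edges n" "b \<notin> x"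
    and y: "y = insert b (x - {a})"
  shows "bij_betw (image (Transposition.transpose a b) \<circ> Transposition.transpose x y)
           (switch_nbhd n M x) (switch_nbhd n M y)"
proof -
  let ?\<pi> = "Transposition.transpose a b"
  have "a \<in> all_edges n" using x a unfolding graphs_M_def by auto
  then have \<pi>_edges: "?\<pi> ` all_edges n = all_edges n" using b by simp
  have \<pi>x: "?\<pi> ` x = y" using transpose_image_exchange[OF a b(2)] y by simp
  then have \<pi>y: "?\<pi> ` y = x" using transpose_image_involutory by metis
  have adj: "switch_adj n x y" using a b unfolding y switch_adj_def by blast
  have yV: "y \<in> graphs_M n M" using switch_adj_graphs_M[OF x adj] .
  note nbhd_subset = image_switch_nbhd_subset[OF inj_transpose \<pi>_edges]
  have "switch_nbhd n M y = image ?\<pi> ` image ?\<pi> ` switch_nbhd n M y"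
    by (simp add: image_image transpose_image_involutory)
  also have "\<dots> \<subseteq> image ?\<pi> ` switch_nbhd n M x"
    using nbhd_subset[OF yV] \<pi>y by (intro image_mono) simp
  finally have "image ?\<pi> ` switch_nbhd n M x = switch_nbhd n M y"
    using nbhd_subset[OF x] \<pi>x by (intro equalityI) simp_all
  then have "bij_betw (image ?\<pi>) (switch_nbhd n M x) (switch_nbhd n M y)"
    unfolding bij_betw_def inj_on_def by (simp add: inj_image_eq_iff[OF inj_transpose])
  moreover have "bij_betw (Transposition.transpose x y) (switch_nbhd n M x) (switch_nbhd n M x)"
    using x yV adj unfolding switch_nbhd_def by simp
  ultimately show ?thesis by (rule bij_betw_trans[rotated])
qed

lemma card_Diff_transpose_image_le: "card (u - Transposition.transpose a b ` u) \<le> 1"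
proof -
  obtain c where "u - Transposition.transpose a b ` u \<subseteq> {c}"
  proof (cases "a \<in> u")
    case True
    then show ?thesis
      by (intro that[of a]) (auto simp: in_transpose_image_iff Transposition.transpose_def)
  next
    case False
    then show ?thesis
      by (intro that[of b]) (auto simp: in_transpose_image_iff Transposition.transpose_def)
  qed
  from card_mono[OF _ this] show ?thesis by simp
qed

lemma transpose_image_switch_fixed:
  assumes a: "a \<in> x" and b: "b \<notin> x" and e: "e \<in> x" and f: "f \<notin> x"
    and ef: "e = a \<or> f = b" and ne: "insert f (x - {e}) \<noteq> insert b (x - {a})"
  shows "Transposition.transpose a b ` insert f (x - {e}) = insert f (x - {e})"
proof (rule transpose_image_eq)
  from ef show "a \<in> insert f (x - {e}) \<longleftrightarrow> b \<in> insert f (x - {e})"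
  proof
    assume "e = a"
    then have "f \<noteq> b" using ne by blast
    then show ?thesis using \<open>e = a\<close> a b f by blast
  next
    assume "f = b"
    then have "e \<noteq> a" using ne by blast
    then show ?thesis using \<open>f = b\<close> a by blast
  qed
qed

lemma gdist_switch_nbhd_transpose_le:
  assumes x: "x \<in> graphs_M n M" and a: "a \<in> x" and b: "b \<in> all_edges n" "b \<notin> x"
    and y: "y = insert b (x - {a})" and u: "u \<in> switch_nbhd n M x"
  shows "gdist (graphs_M n M) (switch_adj n) u
           ((image (Transposition.transpose a b) \<circ> Transposition.transpose x y) u)
         \<le> of_bool (u \<in> (\<lambda>(e, f). insert f (x - {e})) ` ((x - {a}) \<times> (all_edges n - insert b x)))"
  (is "gdist _ _ u (?T u) \<le> of_bool (u \<in> ?C)")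
proof -
  let ?\<pi> = "Transposition.transpose a b"
  have Tu: "?T u \<in> graphs_M n M"
    using bij_betw_apply[OF bij_betw_switch_nbhd_transpose[OF x a b y] u]
    unfolding switch_nbhd_def by simp
  have uV: "u \<in> graphs_M n M" using u unfolding switch_nbhd_def by simp
  have \<pi>x: "?\<pi> ` x = y" using transpose_image_exchange[OF a b(2)] y by simp
  then have \<pi>y: "?\<pi> ` y = x" using transpose_image_involutory by metis
  consider "u = x" | "u = y" | "u \<noteq> x" "u \<noteq> y" by blast
  then show ?thesis
  proof cases
    case 1
    then show ?thesis using \<pi>y gdist_graphs_M[OF uV Tu] by simp
  next
    case 2
    then show ?thesis using \<pi>x gdist_graphs_M[OF uV Tu] by simp
  next
    case 3
    then have Tu_eq: "?T u = ?\<pi> ` u" by simp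
    obtain e f where e: "e \<in> x" and f: "f \<in> all_edges n" "f \<notin> x" and ueq: "u = insert f (x - {e})"
      using u 3(1) unfolding switch_nbhd_def switch_adj_def by auto
    have "u \<in> ?C" if "e \<noteq> a" "f \<noteq> b"
      using that e f ueq by (intro image_eqI[of _ _ "(e, f)"]) auto
    show ?thesis
    proof (cases "u \<in> ?C")
      case True
      then show ?thesis using gdist_graphs_M[OF uV Tu] Tu_eq card_Diff_transpose_image_le by simp
    next
      case False
      with \<open>e \<noteq> a \<Longrightarrow> f \<noteq> b \<Longrightarrow> u \<in> ?C\<close> have ef: "e = a \<or> f = b" by blast
      have "?\<pi> ` u = u"
        using transpose_image_switch_fixed[OF a b(2) e f(2) ef 3(2)[unfolded ueq y]] ueq by simp
      then show ?thesis using gdist_graphs_M[OF uV Tu] Tu_eq by simp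
    qed
  qed
qed

lemma card_switches_avoiding_le:
  assumes x: "x \<in> graphs_M n M" and a: "a \<in> x" and b: "b \<in> all_edges n" "b \<notin> x"
  shows "card ((\<lambda>(e, f). insert f (x - {e})) ` ((x - {a}) \<times> (all_edges n - insert b x)))
           \<le> (M - 1) * ((n choose 2) - (M + 1))"
proof -
  have fin: "finite x" "x \<subseteq> all_edges n" "card x = M"
    using x graphs_M_finite[OF x] unfolding graphs_M_def by auto
  have "card (x - {a}) = M - 1" using fin a by simp
  moreover have "card (all_edges n - insert b x) = (n choose 2) - (M + 1)"
    using card_Diff_subset[of "insert b x" "all_edges n"] fin b card_all_edges by simp
  ultimately show ?thesis
    using card_image_le[of "(x - {a}) \<times> (all_edges n - insert b x)"] fin(1) finite_all_edges
    by (simp add: card_cartesian_product)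
qed

definition switch_prob :: "nat \<Rightarrow> nat \<Rightarrow> real" where
  "switch_prob n M = 1 / (real M * (real (n choose 2) - real M) + 1)"

lemma switch_walk_eq:
  assumes "x \<in> graphs_M n M"
  shows "switch_walk n M x = (\<lambda>u. if u \<in> switch_nbhd n M x then switch_prob n M else 0)"
  using switch_adj_graphs_M[OF assms]
  unfolding switch_walk_def switch_nbhd_def switch_prob_def by (auto simp: assms)

lemma switch_walk_adjacent_coupling:
  assumes x: "x \<in> graphs_M n M" and adj: "switch_adj n x y" and MN: "M \<le> n choose 2"
  shows "\<exists>A\<in>couplings (graphs_M n M) (switch_walk n M x) (switch_walk n M y).
           coupling_cost (graphs_M n M) (\<lambda>u v. real (gdist (graphs_M n M) (switch_adj n) u v)) A
             \<le> real ((M - 1) * ((n choose 2) - (M + 1))) * switch_prob n M"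
proof -
  let ?V = "graphs_M n M" and ?p = "switch_prob n M"
  obtain a b where a: "a \<in> x" and b: "b \<in> all_edges n" "b \<notin> x" and y: "y = insert b (x - {a})"
    using adj unfolding switch_adj_def by auto
  \<comment> \<open>the outer transposition fixes \<open>x\<close> and \<open>y\<close>, which the edge transposition would swap\<close>
  define T where "T = image (Transposition.transpose a b) \<circ> Transposition.transpose x y"
  define C where "C = (\<lambda>(e, f). insert f (x - {e})) ` ((x - {a}) \<times> (all_edges n - insert b x))"
  have T: "bij_betw T (switch_nbhd n M x) (switch_nbhd n M y)"
    unfolding T_def using bij_betw_switch_nbhd_transpose[OF x a b y] .
  have p: "?p \<ge> 0" using MN unfolding switch_prob_def by simp
  have nbhd: "switch_nbhd n M x \<subseteq> ?V" "switch_nbhd n M y \<subseteq> ?V"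
    unfolding switch_nbhd_def by auto
  define A where "A = (\<lambda>u v. if u \<in> switch_nbhd n M x \<and> v = T u then ?p else 0)"
  note coupling = bij_betw_coupling[OF finite_graphs_M nbhd T p, folded A_def]
  have "(\<Sum>u\<in>switch_nbhd n M x. real (gdist ?V (switch_adj n) u (T u)))
          \<le> (\<Sum>u\<in>switch_nbhd n M x. of_bool (u \<in> C))"
    using gdist_switch_nbhd_transpose_le[OF x a b y] unfolding T_def C_def
    by (intro sum_mono) (metis of_nat_le_iff of_nat_of_bool)
  also have "\<dots> \<le> real (card C)"
  proof -
    have "finite C" unfolding C_def using x graphs_M_finite finite_all_edges by simp
    then show ?thesis using finite_subset[OF nbhd(1) finite_graphs_M] by (simp add: card_mono)
  qed
  also have "\<dots> \<le> real ((M - 1) * ((n choose 2) - (M + 1)))"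
    unfolding C_def using card_switches_avoiding_le[OF x a b] by linarith
  finally have cost: "coupling_cost ?V (\<lambda>u v. real (gdist ?V (switch_adj n) u v)) A
                       \<le> real ((M - 1) * ((n choose 2) - (M + 1))) * ?p"
    using coupling(2) p by (simp add: mult.commute mult_left_mono)
  show ?thesis
    unfolding switch_walk_eq[OF x] switch_walk_eq[OF switch_adj_graphs_M[OF x adj]]
    using cost coupling(1) by (rule bexI)
qed

lemma transport_dist_switch_walk_le:
  assumes MN: "M + 1 \<le> n choose 2" and G1: "G1 \<in> graphs_M n M" and G2: "G2 \<in> graphs_M n M"
  shows "transport_dist (graphs_M n M) (switch_adj n) (switch_walk n M G1) (switch_walk n M G2)
           \<le> real (card (G1 - G2)) * (real ((M - 1) * ((n choose 2) - (M + 1))) * switch_prob n M)"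
proof -
  let ?V = "graphs_M n M"
  let ?d = "\<lambda>u v. real (gdist ?V (switch_adj n) u v)"
  have "\<exists>A\<in>couplings ?V (switch_walk n M G1) (switch_walk n M G2).
          coupling_cost ?V ?d A \<le> real (card (G1 - G2)) * (real ((M - 1) * ((n choose 2) - (M + 1))) * switch_prob n M)"
  proof (rule coupling_along_walk[OF finite_graphs_M])
    show "?d u w \<le> ?d u v + ?d v w" if "u \<in> ?V" "v \<in> ?V" "w \<in> ?V" for u v w
      using that card_Diff_triangle[OF graphs_M_finite[OF that(1)] graphs_M_finite[OF that(2)], of w]
      by (simp add: gdist_graphs_M)
    show "?d u u = 0" if "u \<in> ?V" for u using that by (simp add: gdist_graphs_M)
    show "switch_walk n M u v \<ge> 0" for u v using MN unfolding switch_walk_def by simp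
    show "\<exists>A\<in>couplings ?V (switch_walk n M u) (switch_walk n M v).
            coupling_cost ?V ?d A \<le> real ((M - 1) * ((n choose 2) - (M + 1))) * switch_prob n M"
      if "u \<in> ?V" "switch_adj n u v" for u v
      using switch_walk_adjacent_coupling[OF that] MN by simp
    show "walk ?V (switch_adj n) (card (G1 - G2)) G1 G2" by (rule walk_card_Diff[OF G1 G2])
  qed
  then show ?thesis using transport_dist_le_coupling_cost order_trans by blast
qed

lemma one_minus_switch_cost_eq:
  assumes "1 \<le> M" "M + 1 \<le> N"
  shows "1 - real ((M - 1) * (N - (M + 1))) / (real M * (real N - real M) + 1)
           = real N / (real M * (real N - real M) + 1)"
proof -
  have "real M * (real N - real M) \<ge> 0" using assms by simp
  moreover have "real ((M - 1) * (N - (M + 1))) = (real M - 1) * (real N - real M - 1)"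
    using assms by (simp add: of_nat_diff)
  ultimately show ?thesis by (simp add: field_simps)
qed

theorem mainTheorem6:
  fixes n M :: nat
  assumes "n \<ge> 2" and "1 \<le> M" and "M \<le> (n choose 2) - 1"
    and "G1 \<in> graphs_M n M" and "G2 \<in> graphs_M n M" and "G1 \<noteq> G2"
  shows "ollivier_ricci (graphs_M n M) (switch_adj n) (switch_walk n M) G1 G2
           \<ge> real (n choose 2) / (real M * (real (n choose 2) - real M) + 1)"
proof -
  have MN: "M + 1 \<le> n choose 2" using assms(2,3) by linarith
  have "card (G1 - G2) > 0"
    using assms(4-6) graphs_M_eqI graphs_M_finite by (metis card_gt_0_iff finite_Diff)
  then have "transport_dist (graphs_M n M) (switch_adj n) (switch_walk n M G1) (switch_walk n M G2)
               / real (gdist (graphs_M n M) (switch_adj n) G1 G2)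
             \<le> real ((M - 1) * ((n choose 2) - (M + 1))) * switch_prob n M"
    using transport_dist_switch_walk_le[OF MN assms(4,5)] gdist_graphs_M[OF assms(4,5)]
    by (simp add: divide_le_eq mult.commute)
  then show ?thesis
    using one_minus_switch_cost_eq[OF assms(2) MN]
    unfolding ollivier_ricci_def switch_prob_def by simp
qed

end
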